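(* Let $P$ be a $d$-dimensional convex polytope with vertex $x$, and let $T$ be a face of $P$ containing $x$. Let $P'$ be $P$ truncated at $T$, and let $F$ be the facet of $P'$ that is entirely contained in the boundary hyperplane of the halfspace used for the truncation. Let $w$ be a vertex of $P$ adjacent to $x$ (in the graph of $P$) and not contained in $T$, and let $v$ be the vertex of $P'$ contained in $F$ and adjacent to $w$ (with $w$ regarded as a vertex of $P'$). If $P$ is simple at $w$, then $P'$ is simple at $v$.
   Context: For a polytope $P$ and face $T$, "$P$ truncated at $T$" is the polytope obtained by intersecting $P$ with a closed halfspace which contains no vertex of $T$ and whose interior contains all vertices of $P$ not in $T$. A $d$-dimensional polytope is simple at a vertex $v$ if $v$ has degree $d$ in the graph of the polytope (graph: vertices of the polytope, adjacent iff they lie on a common $1$-dimensional face). *)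

theory Defs
  imports "HOL-Analysis.Analysis"
begin

definition poly_adjacent :: "'a::euclidean_space set \<Rightarrow> 'a \<Rightarrow> 'a \<Rightarrow> bool" where
  "poly_adjacent P u v \<longleftrightarrow>
     u extreme_point_of P \<and> v extreme_point_of P \<and> u \<noteq> v \<and>
     (\<exists>e. e edge_of P \<and> u \<in> e \<and> v \<in> e)"

definition poly_degree :: "'a::euclidean_space set \<Rightarrow> 'a \<Rightarrow> nat" where
  "poly_degree P v = card {u. poly_adjacent P v u}"

definition simple_at :: "'a::euclidean_space set \<Rightarrow> 'a \<Rightarrow> bool" where
  "simple_at P v \<longleftrightarrow> v extreme_point_of P \<and> int (poly_degree P v) = aff_dim P"

definition truncating_halfspace :: "'a::euclidean_space set \<Rightarrow> 'a set \<Rightarrow> 'a \<Rightarrow> real \<Rightarrow> bool" where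
  "truncating_halfspace P T a b \<longleftrightarrow>
     a \<noteq> 0 \<and>
     (\<forall>t. t extreme_point_of T \<longrightarrow> a \<bullet> t > b) \<and>
     (\<forall>u. u extreme_point_of P \<and> u \<notin> T \<longrightarrow> a \<bullet> u < b)"

end

theory Submission
  imports Defs
begin

text \<open>At a simple vertex \<open>w\<close> of a \<open>d\<close>-polytope the \<open>d\<close> edge directions \<open>u - w\<close> generate
  the cone of the polytope at \<open>w\<close> and are therefore linearly independent: near \<open>w\<close> the
  polytope is a simplicial cone. An edge of \<open>P'\<close> from \<open>w\<close> runs along one of these rays, so the
  cutting hyperplane (which contains no vertex of \<open>P\<close>) meets it at \<open>v = w + \<mu> (u\<^sub>1 - w)\<close>
  with \<open>0 < \<mu> < 1\<close>. Near \<open>v\<close>, \<open>P'\<close> is again a simplicial cone, spanned by \<open>w - u\<^sub>1\<close> and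
  the other edge directions of \<open>w\<close> sheared along \<open>u\<^sub>1 - w\<close> into the hyperplane. Every edge
  of \<open>P'\<close> at \<open>v\<close> runs along one of these \<open>d\<close> rays, and two neighbours on the same ray would
  contradict extremality, so \<open>v\<close> has at most \<open>d\<close> neighbours; it has at least \<open>d\<close>, as every
  vertex of a \<open>d\<close>-polytope does.\<close>

section \<open>Nonnegative combinations\<close>

definition nonneg_comb :: "('b \<Rightarrow> 'a::real_vector) \<Rightarrow> 'b set \<Rightarrow> 'a \<Rightarrow> bool" where
  "nonneg_comb R K y \<longleftrightarrow> (\<exists>c. (\<forall>k\<in>K. 0 \<le> c k) \<and> y = (\<Sum>k\<in>K. c k *\<^sub>R R k))"

lemma nonneg_comb_zero: "nonneg_comb R K 0"
  unfolding nonneg_comb_def by (rule exI[of _ "\<lambda>_. 0"]) auto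

lemma nonneg_comb_add:
  assumes "nonneg_comb R K y" "nonneg_comb R K y'"
  shows "nonneg_comb R K (y + y')"
proof -
  obtain c c' where "\<forall>k\<in>K. 0 \<le> c k" "y = (\<Sum>k\<in>K. c k *\<^sub>R R k)"
    and "\<forall>k\<in>K. 0 \<le> c' k" "y' = (\<Sum>k\<in>K. c' k *\<^sub>R R k)"
    using assms unfolding nonneg_comb_def by blast
  then show ?thesis unfolding nonneg_comb_def
    by (intro exI[of _ "\<lambda>k. c k + c' k"]) (simp add: scaleR_add_left sum.distrib)
qed

lemma nonneg_comb_scaleR:
  assumes "nonneg_comb R K y" "0 \<le> t"
  shows "nonneg_comb R K (t *\<^sub>R y)"
proof -
  obtain c where "\<forall>k\<in>K. 0 \<le> c k" "y = (\<Sum>k\<in>K. c k *\<^sub>R R k)"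
    using assms(1) unfolding nonneg_comb_def by blast
  then show ?thesis unfolding nonneg_comb_def
    by (intro exI[of _ "\<lambda>k. t * c k"]) (simp add: assms(2) scaleR_sum_right)
qed

lemma nonneg_comb_base:
  assumes "finite K" "k \<in> K"
  shows "nonneg_comb R K (R k)"
  unfolding nonneg_comb_def
  by (rule exI[of _ "\<lambda>i. if i = k then 1 else 0"])
     (simp add: assms sum.delta if_distrib[of "\<lambda>c. c *\<^sub>R _"] cong: if_cong)

lemma nonneg_comb_sum:
  assumes "finite W" "\<And>x. x \<in> W \<Longrightarrow> nonneg_comb R K (f x)" "\<And>x. x \<in> W \<Longrightarrow> 0 \<le> t x"
  shows "nonneg_comb R K (\<Sum>x\<in>W. t x *\<^sub>R f x)"
  using assms
proof (induction W rule: finite_induct)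
  case empty
  then show ?case by (simp add: nonneg_comb_zero)
next
  case (insert x W)
  then show ?case by (simp add: nonneg_comb_add nonneg_comb_scaleR)
qed

lemma nonneg_comb_convex_hull:
  assumes "finite W" "\<And>x. x \<in> W \<Longrightarrow> nonneg_comb R K (x - z)" "q \<in> convex hull W"
  shows "nonneg_comb R K (q - z)"
proof -
  obtain t where t: "\<forall>x\<in>W. 0 \<le> t x" "sum t W = 1" "(\<Sum>x\<in>W. t x *\<^sub>R x) = q"
    using assms(3) convex_hull_finite[OF assms(1)] by auto
  have "q - z = (\<Sum>x\<in>W. t x *\<^sub>R x) - (\<Sum>x\<in>W. t x) *\<^sub>R z"
    using t by simp
  also have "\<dots> = (\<Sum>x\<in>W. t x *\<^sub>R (x - z))"
    by (simp add: scaleR_diff_right sum_subtractf scaleR_sum_left)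
  finally show ?thesis
    using nonneg_comb_sum[OF assms(1), of R K "\<lambda>x. x - z" t] assms(2) t(1) by simp
qed

lemma nonneg_comb_in_span:
  assumes "nonneg_comb R K y"
  shows "y \<in> span (R ` K)"
proof -
  obtain c where c: "y = (\<Sum>k\<in>K. c k *\<^sub>R R k)"
    using assms unfolding nonneg_comb_def by blast
  show ?thesis
    unfolding c by (intro span_sum span_scale span_base) auto
qed

section \<open>The edge cone at a vertex of a polytope\<close>

lemma polytope_extreme_points:
  fixes P :: "'a::euclidean_space set"
  assumes "polytope P"
  shows "finite {v. v extreme_point_of P}" "P = convex hull {v. v extreme_point_of P}"
proof -
  obtain S where "finite S" "P = convex hull S"
    using assms polytope_def by blast
  then show "P = convex hull {v. v extreme_point_of P}"
    using Krein_Milman_polytope by simp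
  show "finite {v. v extreme_point_of P}"
    using finite_polyhedron_extreme_points polytope_imp_polyhedron assms by blast
qed

lemma finite_poly_adjacent:
  fixes P :: "'a::euclidean_space set"
  assumes "polytope P"
  shows "finite {u. poly_adjacent P v u}"
  by (rule finite_subset[OF _ polytope_extreme_points(1)[OF assms]]) (auto simp: poly_adjacent_def)

lemma polyhedron_point_in_rel_interior_face:
  fixes Q :: "'a::euclidean_space set"
  assumes "polyhedron Q" "r \<in> Q"
  obtains G where "G face_of Q" "r \<in> rel_interior G"
proof -
  define FF where "FF = {G. G face_of Q \<and> r \<in> G}"
  have "Q \<in> FF"
    using assms polyhedron_imp_convex face_of_refl unfolding FF_def by blast
  then obtain G where G: "G \<in> FF" and Gmin: "\<And>G'. G' \<in> FF \<Longrightarrow> nat (aff_dim G + 1) \<le> nat (aff_dim G' + 1)"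
    using ex_has_least_nat[of "\<lambda>G. G \<in> FF" Q "\<lambda>G. nat (aff_dim G + 1)"] by blast
  have GQ: "G face_of Q" and rG: "r \<in> G"
    using G FF_def by auto
  have "r \<in> rel_interior G"
  proof (rule ccontr)
    assume "r \<notin> rel_interior G"
    have polyG: "polyhedron G"
      using GQ assms(1) face_of_polyhedron_polyhedron by blast
    with rG \<open>r \<notin> rel_interior G\<close> have "r \<in> rel_frontier G"
      by (simp add: rel_frontier_def polyhedron_imp_closed)
    then obtain F where F: "F facet_of G" "r \<in> F"
      using rel_frontier_of_polyhedron[OF polyG] by blast
    then have "F \<in> FF"
      using facet_of_imp_face_of face_of_trans GQ FF_def by blast
    moreover have "aff_dim F < aff_dim G"
      using F(1) unfolding facet_of_def by simp
    ultimately show False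
      using Gmin aff_dim_geq[of F] by fastforce
  qed
  then show thesis using that GQ by blast
qed

lemma aff_dim_hyperplane_slice_rel_interior:
  fixes G :: "'a::euclidean_space set"
  assumes "convex G" "r \<in> rel_interior G" "h \<bullet> r = \<gamma>" "\<not> G \<subseteq> {x. h \<bullet> x = \<gamma>}"
  shows "aff_dim (G \<inter> {x. h \<bullet> x = \<gamma>}) = aff_dim G - 1"
proof -
  define H where "H = {x. h \<bullet> x = \<gamma>}"
  define A where "A = affine hull G \<inter> H"
  obtain e where "e > 0" and ball: "ball r e \<inter> affine hull G \<subseteq> G"
    using assms(2) mem_rel_interior_ball by blast
  have "r \<in> G"
    using assms(2) rel_interior_subset by blast
  then have rA: "r \<in> A"
    using assms(3) hull_inc unfolding A_def H_def by fastforce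
  have "\<not> affine hull G \<subseteq> H"
    using assms(4) hull_subset unfolding H_def by fast
  then have dimA: "aff_dim A = aff_dim G - 1"
    using aff_dim_affine_Int_hyperplane[OF affine_affine_hull, of G h \<gamma>] rA
    unfolding A_def H_def by (simp split: if_splits) fast
  have "convex A"
    unfolding A_def H_def by (intro convex_Int convex_affine_hull convex_hyperplane)
  then have "aff_dim A = aff_dim (A \<inter> ball r e)"
    using aff_dim_convex_Int_open[of A "ball r e"] rA \<open>e > 0\<close> by fastforce
  also have "\<dots> \<le> aff_dim (G \<inter> H)"
    using ball by (intro aff_dim_subset) (auto simp: A_def)
  also have "\<dots> \<le> aff_dim A"
    using hull_subset[of G affine] by (intro aff_dim_subset) (auto simp: A_def)
  finally show ?thesis
    using dimA H_def by simp
qed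

lemma polytope_vertex_cut:
  fixes Q :: "'a::euclidean_space set"
  assumes "polytope Q" "z extreme_point_of Q"
  obtains h \<gamma> where "\<gamma> < h \<bullet> z" "\<And>p. p extreme_point_of Q \<Longrightarrow> p \<noteq> z \<Longrightarrow> h \<bullet> p < \<gamma>"
proof -
  have "{z} exposed_face_of Q"
    using assms face_of_singleton exposed_face_of_polyhedron polytope_imp_polyhedron by blast
  then obtain h \<beta> where Q: "Q \<subseteq> {x. h \<bullet> x \<le> \<beta>}" and z: "{z} = Q \<inter> {x. h \<bullet> x = \<beta>}"
    unfolding exposed_face_of_def by blast
  define V where "V = {p. p extreme_point_of Q} - {z}"
  have V: "h \<bullet> p < \<beta>" if "p \<in> V" for p
    using that Q z unfolding V_def extreme_point_of_def by force
  define m where "m = Max (insert (\<beta> - 1) ((\<lambda>p. h \<bullet> p) ` V))"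
  have finV: "finite V"
    using polytope_extreme_points(1)[OF assms(1)] V_def by simp
  have "m < \<beta>"
    using finV V unfolding m_def by auto
  moreover have "h \<bullet> p \<le> m" if "p \<in> V" for p
    using finV that unfolding m_def by auto
  moreover have "h \<bullet> z = \<beta>"
    using z by blast
  ultimately show thesis
    using that[of "(m + \<beta>) / 2" h] V_def by fastforce
qed

lemma polytope_aff_dim_1_segment:
  fixes G :: "'a::euclidean_space set"
  assumes "polytope G" "aff_dim G = 1"
  obtains p1 p2 where "p1 \<noteq> p2" "G = closed_segment p1 p2"
proof -
  obtain n where "n simplex G"
    using polytope_lowdim_imp_simplex[OF assms(1)] assms(2) by auto
  then have "1 simplex G"
    using aff_dim_simplex assms(2) by metis
  then obtain C where "int (card C) = 2" "G = convex hull C"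
    unfolding simplex_def by auto
  then show thesis
    using that card_2_iff[of C] segment_convex_hull by (metis nat_int numeral_eq_iff of_nat_numeral)
qed

text \<open>The face of \<open>Q\<close> carrying \<open>r\<close> in its relative interior meets the hyperplane in the single
  point \<open>r\<close>, so it has dimension one.\<close>
lemma hyperplane_section_vertex_on_edge:
  fixes Q :: "'a::euclidean_space set"
  assumes "polytope Q" "\<And>p. p extreme_point_of Q \<Longrightarrow> h \<bullet> p \<noteq> \<gamma>"
    and r: "r extreme_point_of (Q \<inter> {x. h \<bullet> x = \<gamma>})"
  obtains G where "G edge_of Q" "r \<in> G"
proof -
  define H where "H = {x. h \<bullet> x = \<gamma>}"
  have rQ: "r \<in> Q" and rH: "r \<in> H"
    using r by (auto simp: extreme_point_of_def H_def)
  obtain G where GQ: "G face_of Q" and rG: "r \<in> rel_interior G"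
    using polyhedron_point_in_rel_interior_face[OF polytope_imp_polyhedron[OF assms(1)] rQ] .
  have convG: "convex G"
    using GQ face_of_imp_convex by blast
  have "\<not> G \<subseteq> H"
  proof
    assume "G \<subseteq> H"
    have "G \<noteq> {}"
      using rG rel_interior_subset by blast
    then obtain p where "p extreme_point_of G"
      using polytope_extreme_points(2)[OF face_of_polytope_polytope[OF assms(1) GQ]] by fastforce
    then have "p extreme_point_of Q" "p \<in> H"
      using extreme_point_of_face[OF GQ] \<open>G \<subseteq> H\<close> by (auto simp: extreme_point_of_def)
    then show False
      using assms(2) H_def by blast
  qed
  have "rel_interior (G \<inter> H) = rel_interior G \<inter> H"
    using convex_affine_rel_interior_Int[OF convG affine_hyperplane] rG rH H_def by blast
  then have "r \<in> rel_interior (G \<inter> H)"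
    using rG rH by blast
  moreover have "r extreme_point_of (G \<inter> H)"
    using r face_of_imp_subset[OF GQ] rG rel_interior_subset rH
    unfolding extreme_point_of_def H_def by blast
  ultimately have "G \<inter> H = {r}"
    using extreme_point_not_in_REL_INTERIOR by blast
  moreover have "aff_dim (G \<inter> H) = aff_dim G - 1"
    using aff_dim_hyperplane_slice_rel_interior[OF convG rG] rH \<open>\<not> G \<subseteq> H\<close>
    unfolding H_def by blast
  ultimately have "G edge_of Q"
    using GQ unfolding edge_of_def by simp
  then show thesis
    using that rG rel_interior_subset by blast
qed

lemma slice_extreme_point_on_edge:
  fixes Q :: "'a::euclidean_space set"
  assumes Q: "polytope Q" "z extreme_point_of Q"
    and cut: "\<gamma> < h \<bullet> z" "\<And>p. p extreme_point_of Q \<Longrightarrow> p \<noteq> z \<Longrightarrow> h \<bullet> p < \<gamma>"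
    and r: "r extreme_point_of (Q \<inter> {x. h \<bullet> x = \<gamma>})"
  obtains p where "poly_adjacent Q z p" "r \<in> closed_segment z p"
proof -
  have "h \<bullet> p \<noteq> \<gamma>" if "p extreme_point_of Q" for p
    using cut that by (cases "p = z") auto
  then obtain G where edge: "G edge_of Q" and rG: "r \<in> G"
    using hyperplane_section_vertex_on_edge[OF Q(1) _ r] by blast
  obtain p1 p2 where "p1 \<noteq> p2" and G: "G = closed_segment p1 p2"
    using polytope_aff_dim_1_segment edge face_of_polytope_polytope[OF Q(1)]
    unfolding edge_of_def by metis
  moreover have "G face_of Q"
    using edge edge_of_def by blast
  ultimately have ends: "p1 extreme_point_of Q" "p2 extreme_point_of Q" "p1 \<in> G" "p2 \<in> G"
    using extreme_point_of_face[of G Q] by (auto simp: extreme_point_of_segment)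
  consider "p1 = z" | "p2 = z" | "p1 \<noteq> z" "p2 \<noteq> z"
    by blast
  then show thesis
  proof cases
    case 1
    then show thesis
      using that[of p2] Q(2) ends edge \<open>p1 \<noteq> p2\<close> rG G unfolding poly_adjacent_def by blast
  next
    case 2
    then have "r \<in> closed_segment z p1"
      using rG G closed_segment_commute by metis
    with 2 show thesis
      using that[of p1] Q(2) ends edge \<open>p1 \<noteq> p2\<close> unfolding poly_adjacent_def by blast
  next
    case 3
    then have "{p1, p2} \<subseteq> {x. h \<bullet> x < \<gamma>}"
      using cut(2) ends by auto
    then have "G \<subseteq> {x. h \<bullet> x < \<gamma>}"
      unfolding G segment_convex_hull by (intro hull_minimal) (auto simp: convex_halfspace_lt)
    then show thesis
      using rG r by (auto simp: extreme_point_of_def)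
  qed
qed

lemma vertex_cut_slice_in_cone:
  fixes Q :: "'a::euclidean_space set"
  assumes Q: "polytope Q" "z extreme_point_of Q"
    and cut: "\<gamma> < h \<bullet> z" "\<And>p. p extreme_point_of Q \<Longrightarrow> p \<noteq> z \<Longrightarrow> h \<bullet> p < \<gamma>"
    and "q \<in> Q" "h \<bullet> q = \<gamma>"
  shows "nonneg_comb (\<lambda>u. u - z) {u. poly_adjacent Q z u} (q - z)"
proof -
  define S where "S = Q \<inter> {x. h \<bullet> x = \<gamma>}"
  have "polytope S"
    unfolding S_def using polytope_Int_polyhedron[OF Q(1) polyhedron_hyperplane] by blast
  note S = polytope_extreme_points[OF this]
  have "nonneg_comb (\<lambda>u. u - z) {u. poly_adjacent Q z u} (r - z)" if r: "r extreme_point_of S" for r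
  proof -
    obtain p where p: "poly_adjacent Q z p" "r \<in> closed_segment z p"
      using slice_extreme_point_on_edge[OF Q cut(1), of r] cut(2) r unfolding S_def by blast
    then obtain t where "0 \<le> t" "r - z = t *\<^sub>R (p - z)"
      by (auto simp: in_segment algebra_simps)
    moreover have "nonneg_comb (\<lambda>u. u - z) {u. poly_adjacent Q z u} (p - z)"
      using nonneg_comb_base[OF finite_poly_adjacent[OF Q(1)]] p(1) by blast
    ultimately show ?thesis
      using nonneg_comb_scaleR by metis
  qed
  moreover have "q \<in> convex hull {r. r extreme_point_of S}"
    using S(2) assms(5,6) S_def by blast
  ultimately show ?thesis
    using nonneg_comb_convex_hull[OF S(1)] by blast
qed

text \<open>Each vertex \<open>p \<noteq> z\<close> is a positive multiple, seen from \<open>z\<close>, of a point of the slice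
  between \<open>z\<close> and the other vertices.\<close>
lemma polytope_vertex_cone:
  fixes Q :: "'a::euclidean_space set"
  assumes Q: "polytope Q" "z extreme_point_of Q" and "y \<in> Q"
  shows "nonneg_comb (\<lambda>u. u - z) {u. poly_adjacent Q z u} (y - z)"
proof -
  define V where "V = {p. p extreme_point_of Q}"
  obtain h \<gamma> where cut: "\<gamma> < h \<bullet> z" "\<And>p. p extreme_point_of Q \<Longrightarrow> p \<noteq> z \<Longrightarrow> h \<bullet> p < \<gamma>"
    using polytope_vertex_cut[OF Q] by metis
  have zQ: "z \<in> Q"
    using Q(2) by (simp add: extreme_point_of_def)
  have "nonneg_comb (\<lambda>u. u - z) {u. poly_adjacent Q z u} (p - z)" if "p \<in> V" for p
  proof (cases "p = z")
    case True
    then show ?thesis by (simp add: nonneg_comb_zero)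
  next
    case False
    have pQ: "p \<in> Q" and hp: "h \<bullet> p < \<gamma>"
      using cut(2) that False V_def extreme_point_of_def by auto
    define \<theta> where "\<theta> = (h \<bullet> z - \<gamma>) / (h \<bullet> z - h \<bullet> p)"
    have \<theta>: "0 < \<theta>" "\<theta> \<le> 1"
      unfolding \<theta>_def using hp cut(1) by (auto simp: divide_le_eq_1)
    define q where "q = z + \<theta> *\<^sub>R (p - z)"
    have "q = (1 - \<theta>) *\<^sub>R z + \<theta> *\<^sub>R p"
      unfolding q_def by (simp add: algebra_simps)
    then have "q \<in> Q"
      using convexD[OF polytope_imp_convex[OF Q(1)] zQ pQ, of "1 - \<theta>" \<theta>] \<theta> by simp
    have "h \<bullet> q = h \<bullet> z - \<theta> * (h \<bullet> z - h \<bullet> p)"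
      unfolding q_def by (simp add: inner_add_right inner_diff_right algebra_simps)
    then have "h \<bullet> q = \<gamma>"
      using hp cut(1) unfolding \<theta>_def by simp
    then have "nonneg_comb (\<lambda>u. u - z) {u. poly_adjacent Q z u} ((1 / \<theta>) *\<^sub>R (q - z))"
      using nonneg_comb_scaleR[OF vertex_cut_slice_in_cone[OF Q cut(1) _ \<open>q \<in> Q\<close>], of "1 / \<theta>"]
        cut(2) \<theta> by simp
    then show ?thesis
      using \<theta> by (simp add: q_def)
  qed
  moreover have "y \<in> convex hull V"
    using polytope_extreme_points(2)[OF Q(1)] assms(3) V_def by simp
  ultimately show ?thesis
    using nonneg_comb_convex_hull[of V] polytope_extreme_points(1)[OF Q(1)] V_def by blast
qed

lemma aff_dim_le_dim_of_cone:
  fixes S :: "'a::euclidean_space set"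
  assumes "z \<in> S" "\<And>y. y \<in> S \<Longrightarrow> nonneg_comb R K (y - z)"
  shows "aff_dim S \<le> int (dim (R ` K))"
proof -
  have "(+) (- z) ` S \<subseteq> span (R ` K)"
  proof
    fix x assume "x \<in> (+) (- z) ` S"
    then obtain y where "y \<in> S" "x = y - z"
      by auto
    then show "x \<in> span (R ` K)"
      using nonneg_comb_in_span[OF assms(2)] by simp
  qed
  then have "dim ((+) (- z) ` S) \<le> dim (R ` K)"
    using dim_subset[of "(+) (- z) ` S" "span (R ` K)"] by simp
  then show ?thesis
    using aff_dim_eq_dim[OF hull_inc[OF assms(1)]] by simp
qed

lemma aff_dim_le_poly_degree:
  fixes Q :: "'a::euclidean_space set"
  assumes "polytope Q" "z extreme_point_of Q"
  shows "aff_dim Q \<le> int (poly_degree Q z)"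
proof -
  define N where "N = {u. poly_adjacent Q z u}"
  have "finite N"
    using finite_poly_adjacent[OF assms(1)] N_def by simp
  have "z \<in> Q"
    using assms(2) by (simp add: extreme_point_of_def)
  then have "aff_dim Q \<le> int (dim ((\<lambda>u. u - z) ` N))"
    unfolding N_def by (rule aff_dim_le_dim_of_cone[OF _ polytope_vertex_cone[OF assms]])
  also have "dim ((\<lambda>u. u - z) ` N) \<le> card ((\<lambda>u. u - z) ` N)"
    using dim_le_card[OF span_superset finite_imageI[OF \<open>finite N\<close>]] .
  also have "\<dots> \<le> card N"
    using card_image_le \<open>finite N\<close> by blast
  finally show ?thesis
    by (simp add: poly_degree_def N_def)
qed

lemma independent_family_of_aff_dim_eq_card:
  fixes S :: "'a::euclidean_space set"
  assumes "finite K" "z \<in> S" "\<And>y. y \<in> S \<Longrightarrow> nonneg_comb R K (y - z)"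
    and "aff_dim S = int (card K)" and "(\<Sum>k\<in>K. c k *\<^sub>R R k) = 0"
  shows "\<forall>k\<in>K. c k = 0"
proof -
  have "card K \<le> dim (R ` K)"
    using aff_dim_le_dim_of_cone[of z S R K] assms(2-4) by simp
  moreover have "dim (R ` K) \<le> card (R ` K)"
    using dim_le_card[OF span_superset finite_imageI[OF assms(1)]] .
  moreover have "card (R ` K) \<le> card K"
    using card_image_le assms(1) by blast
  ultimately have card: "card (R ` K) = card K" "dim (R ` K) = card (R ` K)"
    by linarith+
  then have inj: "inj_on R K"
    using eq_card_imp_inj_on[OF assms(1)] by metis
  have "independent (R ` K)"
    using card_eq_dim[OF span_superset, of "R ` K"] card assms(1) by simp
  moreover have "(\<Sum>x\<in>R ` K. (c \<circ> the_inv_into K R) x *\<^sub>R x) = 0"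
    using assms(5) by (simp add: sum.reindex[OF inj] the_inv_into_f_f[OF inj])
  ultimately show ?thesis
    using the_inv_into_f_f[OF inj] assms(1) unfolding independent_explicit by fastforce
qed

section \<open>Simplicial vertices\<close>

text \<open>Near \<open>z\<close>, the set \<open>S\<close> coincides with \<open>z\<close> plus the cone spanned by the linearly
  independent rays \<open>R k\<close>.\<close>
definition simplicial_at :: "'a::real_vector set \<Rightarrow> 'a \<Rightarrow> ('b \<Rightarrow> 'a) \<Rightarrow> 'b set \<Rightarrow> bool" where
  "simplicial_at S z R K \<longleftrightarrow>
     finite K \<and>
     (\<forall>c. (\<Sum>k\<in>K. c k *\<^sub>R R k) = 0 \<longrightarrow> (\<forall>k\<in>K. c k = 0)) \<and>
     (\<exists>\<epsilon>>0. \<forall>k\<in>K. \<forall>s. 0 \<le> s \<and> s \<le> \<epsilon> \<longrightarrow> z + s *\<^sub>R R k \<in> S) \<and>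
     (\<forall>y\<in>S. nonneg_comb R K (y - z))"

lemma simplicial_at_coeffs_eq:
  assumes "simplicial_at S z R K" "(\<Sum>k\<in>K. c k *\<^sub>R R k) = (\<Sum>k\<in>K. d k *\<^sub>R R k)"
  shows "\<forall>k\<in>K. c k = d k"
proof -
  have "(\<Sum>k\<in>K. (c k - d k) *\<^sub>R R k) = 0"
    using assms(2) by (simp add: scaleR_diff_left sum_subtractf)
  then show ?thesis
    using assms(1) unfolding simplicial_at_def by fastforce
qed

lemma simplicial_at_simple_vertex:
  fixes Q :: "'a::euclidean_space set"
  assumes "polytope Q" "simple_at Q w"
  shows "simplicial_at Q w (\<lambda>u. u - w) {u. poly_adjacent Q w u}"
proof -
  define N where "N = {u. poly_adjacent Q w u}"
  have wQ: "w extreme_point_of Q"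
    using assms(2) by (simp add: simple_at_def)
  then have "w \<in> Q"
    by (simp add: extreme_point_of_def)
  have finN: "finite N"
    using finite_poly_adjacent[OF assms(1)] N_def by simp
  have cone: "nonneg_comb (\<lambda>u. u - w) N (y - w)" if "y \<in> Q" for y
    using polytope_vertex_cone[OF assms(1) wQ that] N_def by simp
  have "aff_dim Q = int (card N)"
    using assms(2) unfolding simple_at_def poly_degree_def N_def by simp
  then have "\<forall>u\<in>N. c u = 0" if "(\<Sum>u\<in>N. c u *\<^sub>R (u - w)) = 0" for c
    using independent_family_of_aff_dim_eq_card[OF finN \<open>w \<in> Q\<close> cone] that by blast
  moreover have "w + s *\<^sub>R (u - w) \<in> Q" if "u \<in> N" "0 \<le> s" "s \<le> 1" for u s
  proof -
    have "u \<in> Q"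
      using that(1) unfolding N_def poly_adjacent_def extreme_point_of_def by blast
    then have "(1 - s) *\<^sub>R w + s *\<^sub>R u \<in> Q"
      using convexD[OF polytope_imp_convex[OF assms(1)] \<open>w \<in> Q\<close>] that by simp
    then show ?thesis
      by (simp add: algebra_simps)
  qed
  ultimately show ?thesis
    unfolding simplicial_at_def N_def[symmetric] using finN cone
    by (intro conjI allI impI exI[of _ 1]) auto
qed

lemma convex_uniform_ray_steps:
  assumes "convex S" "z \<in> S" "finite K" "\<And>k. k \<in> K \<Longrightarrow> \<exists>t>0. z + t *\<^sub>R R k \<in> S"
  obtains \<epsilon> where "\<epsilon> > 0" "\<And>k s. k \<in> K \<Longrightarrow> 0 \<le> s \<Longrightarrow> s \<le> \<epsilon> \<Longrightarrow> z + s *\<^sub>R R k \<in> S"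
proof -
  obtain t where t: "\<And>k. k \<in> K \<Longrightarrow> t k > 0 \<and> z + t k *\<^sub>R R k \<in> S"
    using assms(4) by metis
  define \<epsilon> where "\<epsilon> = Min (insert 1 (t ` K))"
  have "\<epsilon> > 0"
    using t assms(3) unfolding \<epsilon>_def by auto
  moreover have "z + s *\<^sub>R R k \<in> S" if "k \<in> K" "0 \<le> s" "s \<le> \<epsilon>" for k s
  proof -
    have "s \<le> t k"
      using that assms(3) unfolding \<epsilon>_def by (meson Min_le finite_imageI finite_insert imageI insertCI order_trans)
    then have "(1 - s / t k) *\<^sub>R z + (s / t k) *\<^sub>R (z + t k *\<^sub>R R k) \<in> S"
      using convexD[OF assms(1,2) conjunct2[OF t[OF that(1)]]] t[OF that(1)] that(2)
      by (simp add: divide_le_eq_1)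
    then show ?thesis
      using t[OF that(1)] by (simp add: algebra_simps)
  qed
  ultimately show thesis
    using that by blast
qed

lemma exists_step_in_halfspace:
  fixes a :: "'a::real_inner"
  assumes "a \<bullet> z < b"
  obtains t where "0 < t" "t \<le> 1" "a \<bullet> (z + t *\<^sub>R y) \<le> b"
proof (cases "a \<bullet> y \<le> 0")
  case True
  then show thesis
    using that[of 1] assms by (simp add: inner_add_right)
next
  case False
  define t where "t = min 1 ((b - a \<bullet> z) / (a \<bullet> y))"
  have "t * (a \<bullet> y) \<le> b - a \<bullet> z"
    using False unfolding t_def by (simp add: min_def field_simps)
  then show thesis
    using that[of t] assms False by (simp add: t_def inner_add_right)
qed

lemma simplicial_at_Int_halfspace:
  fixes S :: "'a::euclidean_space set"
  assumes "convex S" "z \<in> S" "a \<bullet> z < b" "simplicial_at S z R K"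
  shows "simplicial_at (S \<inter> {y. a \<bullet> y \<le> b}) z R K"
proof -
  obtain \<epsilon> where "\<epsilon> > 0" and steps: "\<And>k s. k \<in> K \<Longrightarrow> 0 \<le> s \<Longrightarrow> s \<le> \<epsilon> \<Longrightarrow> z + s *\<^sub>R R k \<in> S"
    using assms(4) unfolding simplicial_at_def by blast
  have "\<exists>t>0. z + t *\<^sub>R R k \<in> S \<inter> {y. a \<bullet> y \<le> b}" if "k \<in> K" for k
  proof -
    obtain t where "0 < t" "t \<le> 1" "a \<bullet> (z + t *\<^sub>R (\<epsilon> *\<^sub>R R k)) \<le> b"
      using exists_step_in_halfspace[OF assms(3)] by blast
    then show ?thesis
      using steps[OF that, of "t * \<epsilon>"] \<open>\<epsilon> > 0\<close>
      by (intro exI[of _ "t * \<epsilon>"]) (auto simp: mult_left_le_one_le)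
  qed
  then obtain \<epsilon>' where "\<epsilon>' > 0"
    "\<And>k s. k \<in> K \<Longrightarrow> 0 \<le> s \<Longrightarrow> s \<le> \<epsilon>' \<Longrightarrow> z + s *\<^sub>R R k \<in> S \<inter> {y. a \<bullet> y \<le> b}"
    using convex_uniform_ray_steps[of "S \<inter> {y. a \<bullet> y \<le> b}" z K R] assms(1-4)
    by (auto simp: simplicial_at_def convex_Int convex_halfspace_le)
  then show ?thesis
    using assms(4) unfolding simplicial_at_def by blast
qed

lemma aff_dim_one_subset_line:
  fixes e :: "'a::euclidean_space set"
  assumes "aff_dim e = 1" "z \<in> e" "z' \<in> e" "z \<noteq> z'"
  shows "e \<subseteq> affine hull {z, z'}"
proof -
  have "affine hull {z, z'} \<subseteq> affine hull e"
    using assms(2,3) by (intro hull_mono) auto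
  moreover have "aff_dim (affine hull {z, z'}) = aff_dim (affine hull e)"
    using assms by simp
  ultimately have "affine hull {z, z'} = affine hull e"
    by (intro affine_dim_equal) (auto simp: affine_affine_hull)
  then show ?thesis
    using hull_subset[of e affine] by simp
qed

lemma convex_nonneg_comb_step:
  assumes "convex S" "z \<in> S" "finite K"
    and steps: "\<And>k s. k \<in> K \<Longrightarrow> 0 \<le> s \<Longrightarrow> s \<le> \<epsilon> \<Longrightarrow> z + s *\<^sub>R R k \<in> S"
    and "\<forall>k\<in>K. 0 \<le> d k" "0 \<le> t" "t * sum d K \<le> \<epsilon>"
  shows "z + t *\<^sub>R (\<Sum>k\<in>K. d k *\<^sub>R R k) \<in> S"
proof (cases "sum d K = 0")
  case True
  then show ?thesis
    using assms(2,3,5) sum_nonneg_eq_0_iff by fastforce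
next
  case False
  define D where "D = sum d K"
  have "D > 0"
    using False assms(5) sum_nonneg unfolding D_def by (metis order_le_less)
  then have "(\<Sum>k\<in>K. (d k / D) *\<^sub>R (z + (t * D) *\<^sub>R R k)) \<in> S"
    using assms(3,5,6,7) D_def
    by (intro convex_sum[OF assms(3,1)]) (auto simp: sum_divide_distrib[symmetric] intro: steps)
  moreover have "(\<Sum>k\<in>K. (d k / D) *\<^sub>R (z + (t * D) *\<^sub>R R k)) = z + t *\<^sub>R (\<Sum>k\<in>K. d k *\<^sub>R R k)"
    using \<open>D > 0\<close> D_def
    by (simp add: scaleR_add_right sum.distrib scaleR_sum_right mult.commute flip: scaleR_sum_left sum_divide_distrib)
  ultimately show ?thesis
    by simp
qed

lemma sum_single_coeff_scaleR:
  fixes R :: "'b \<Rightarrow> 'a::real_vector"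
  assumes "finite K" "k \<in> K"
  shows "(\<Sum>i\<in>K. (if i = k then x else 0) *\<^sub>R R i) = x *\<^sub>R R k"
proof -
  have "(\<Sum>i\<in>K. (if i = k then x else 0) *\<^sub>R R i) = (\<Sum>i\<in>K. if i = k then x *\<^sub>R R k else 0)"
    by (rule sum.cong) auto
  then show ?thesis
    using assms by simp
qed

text \<open>Split \<open>z' - z\<close> into its \<open>k\<close>-th term and the rest: small multiples of the two parts give
  points \<open>p \<noteq> q\<close> of \<open>S\<close> whose midpoint lies on the segment from \<open>z\<close> to \<open>z'\<close>, so the face
  contains \<open>p\<close>.\<close>
lemma simplicial_at_step_in_face:
  assumes "convex S" "simplicial_at S z R K" "e face_of S" "z \<in> e" "z' \<in> e"
    and c: "\<forall>i\<in>K. 0 \<le> c i" "z' - z = (\<Sum>i\<in>K. c i *\<^sub>R R i)" and k: "k \<in> K" "0 < c k"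
  obtains t where "0 < t" "z + (t * c k) *\<^sub>R R k \<in> e"
proof -
  have finK: "finite K"
    using assms(2) simplicial_at_def by blast
  have zS: "z \<in> S"
    using assms(3,4) face_of_imp_subset by blast
  obtain \<epsilon> where "\<epsilon> > 0" and steps: "\<And>k s. k \<in> K \<Longrightarrow> 0 \<le> s \<Longrightarrow> s \<le> \<epsilon> \<Longrightarrow> z + s *\<^sub>R R k \<in> S"
    using assms(2) unfolding simplicial_at_def by blast
  define d where "d i = (if i = k then 0 else c i)" for i
  define t where "t = min 1 (\<epsilon> / sum c K)"
  have "c k \<le> sum c K"
    using c(1) finK by (intro member_le_sum[OF k(1)]) auto
  then have t: "0 < t" "t \<le> 1" "t * sum c K \<le> \<epsilon>"
    using k(2) \<open>\<epsilon> > 0\<close> unfolding t_def by (auto simp: min_def field_simps)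
  have "sum d K \<le> sum c K"
    unfolding d_def using c(1) by (intro sum_mono) auto
  then have "t * sum d K \<le> \<epsilon>"
    using t mult_left_mono[of "sum d K" "sum c K" t] by linarith
  then have q: "z + t *\<^sub>R (\<Sum>i\<in>K. d i *\<^sub>R R i) \<in> S" (is "?q \<in> S")
    using t(1) c(1) by (intro convex_nonneg_comb_step[OF assms(1) zS finK steps]) (auto simp: d_def)
  have "t * c k \<le> \<epsilon>"
    using t \<open>c k \<le> sum c K\<close> mult_left_mono[of "c k" "sum c K" t] by linarith
  then have p: "z + (t * c k) *\<^sub>R R k \<in> S" (is "?p \<in> S")
    using t(1) k by (intro steps) auto
  have split: "c k *\<^sub>R R k + (\<Sum>i\<in>K. d i *\<^sub>R R i) = z' - z"
    using k(1) finK unfolding c(2) d_def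
    by (simp add: sum.remove[of K k] if_distrib[of "\<lambda>x. x *\<^sub>R _"] sum.If_cases Diff_eq)
  have "?p \<noteq> ?q"
  proof
    assume "?p = ?q"
    then have "(\<Sum>i\<in>K. (if i = k then t * c k else 0) *\<^sub>R R i) = (\<Sum>i\<in>K. (t * d i) *\<^sub>R R i)"
      unfolding sum_single_coeff_scaleR[OF finK k(1)] by (simp add: scaleR_sum_right)
    then show False
      using simplicial_at_coeffs_eq[OF assms(2)] k t(1) by (fastforce simp: d_def)
  qed
  have "?p + ?q = 2 *\<^sub>R z + t *\<^sub>R (z' - z)"
    unfolding split[symmetric] by (simp add: algebra_simps scaleR_2)
  then have "midpoint ?p ?q = (2 *\<^sub>R z + t *\<^sub>R (z' - z)) /\<^sub>R 2"
    by (simp only: midpoint_def)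
  also have "\<dots> = (1 - t / 2) *\<^sub>R z + (t / 2) *\<^sub>R z'"
    by (simp add: algebra_simps)
  also have "\<dots> \<in> e"
    using convexD[OF face_of_imp_convex[OF assms(3)] assms(4,5)] t by simp
  finally have "?p \<in> e"
    using face_ofD[OF assms(3), of "midpoint ?p ?q" ?p ?q] \<open>?p \<noteq> ?q\<close> p q by simp
  then show thesis
    using that t(1) by blast
qed

lemma simplicial_at_edge_single_ray:
  assumes "convex S" "simplicial_at S z R K" "e edge_of S" "z \<in> e" "z' \<in> e" "z \<noteq> z'"
  obtains k c where "k \<in> K" "c > 0" "z' - z = c *\<^sub>R R k"
proof -
  have finK: "finite K"
    using assms(2) simplicial_at_def by blast
  have eS: "e face_of S" "aff_dim e = 1"
    using assms(3) edge_of_def by auto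
  then have "z' \<in> S"
    using assms(5) face_of_imp_subset by blast
  then obtain c where c: "\<forall>k\<in>K. 0 \<le> c k" "z' - z = (\<Sum>k\<in>K. c k *\<^sub>R R k)"
    using assms(2) unfolding simplicial_at_def nonneg_comb_def by blast
  obtain k where k: "k \<in> K" "c k > 0"
    using c assms(6) by (metis (no_types, lifting) order_le_less right_minus_eq scaleR_eq_0_iff sum.neutral)
  obtain t where "0 < t" "z + (t * c k) *\<^sub>R R k \<in> e"
    using simplicial_at_step_in_face[OF assms(1,2) eS(1) assms(4,5) c k] .
  then obtain v where "z + (t * c k) *\<^sub>R R k = z + v *\<^sub>R (z' - z)"
    using aff_dim_one_subset_line[OF eS(2) assms(4-6)] unfolding affine_hull_2_alt by blast
  then have "(\<Sum>i\<in>K. (if i = k then t * c k else 0) *\<^sub>R R i) = (\<Sum>i\<in>K. (v * c i) *\<^sub>R R i)"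
    unfolding sum_single_coeff_scaleR[OF finK k(1)] c(2) by (simp add: scaleR_sum_right)
  then have "\<forall>i\<in>K. (if i = k then t * c k else 0) = v * c i"
    by (rule simplicial_at_coeffs_eq[OF assms(2)])
  then have "\<forall>i\<in>K. i \<noteq> k \<longrightarrow> c i = 0"
    using k \<open>0 < t\<close> by (metis mult_right_cancel mult_zero_left order_less_irrefl)
  then have "(\<Sum>i\<in>K. c i *\<^sub>R R i) = (\<Sum>i\<in>K. (if i = k then c k else 0) *\<^sub>R R i)"
    by (intro sum.cong) auto
  then show thesis
    using that k c(2) sum_single_coeff_scaleR[OF finK k(1)] by metis
qed

lemma extreme_points_on_ray_eq:
  assumes "p extreme_point_of Q" "q extreme_point_of Q" "v \<in> Q"
    and "0 < cp" "0 < cq" "p - v = cp *\<^sub>R r" "q - v = cq *\<^sub>R r"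
  shows "p = q"
proof (cases "r = 0")
  case True
  then show ?thesis
    using assms(6,7) by simp
next
  case False
  have not_less: "\<not> c1 < c2"
    if "p1 extreme_point_of Q" "q1 extreme_point_of Q" "0 < c1" "p1 - v = c1 *\<^sub>R r" "q1 - v = c2 *\<^sub>R r"
    for p1 q1 c1 c2
  proof
    assume "c1 < c2"
    have "p1 = (1 - c1 / c2) *\<^sub>R v + (c1 / c2) *\<^sub>R q1"
      using that(3-5) \<open>c1 < c2\<close> by (simp add: algebra_simps eq_diff_eq)
    moreover have "v \<noteq> q1"
      using that(3,5) \<open>c1 < c2\<close> False by auto
    moreover have "0 < c1 / c2" "c1 / c2 < 1"
      using that(3) \<open>c1 < c2\<close> by auto
    ultimately have "p1 \<in> open_segment v q1"
      unfolding in_segment by blast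
    then show False
      using that(1,2) assms(3) unfolding extreme_point_of_def by blast
  qed
  have "cp = cq"
    using not_less[OF assms(1,2,4,6,7)] not_less[OF assms(2,1,5,7,6)] by simp
  then show ?thesis
    using assms(6,7) by (metis diff_add_cancel)
qed

lemma poly_degree_le_card_rays:
  fixes Q :: "'a::euclidean_space set"
  assumes "polytope Q" "v extreme_point_of Q" "simplicial_at Q v R K"
  shows "poly_degree Q v \<le> card K"
proof -
  define N where "N = {u. poly_adjacent Q v u}"
  have "\<exists>k\<in>K. \<exists>c>0. u - v = c *\<^sub>R R k" if u: "u \<in> N" for u
  proof -
    obtain e where "e edge_of Q" "v \<in> e" "u \<in> e" "v \<noteq> u"
      using u unfolding N_def poly_adjacent_def by blast
    then obtain k c where "k \<in> K" "c > 0" "u - v = c *\<^sub>R R k"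
      by (rule simplicial_at_edge_single_ray[OF polytope_imp_convex[OF assms(1)] assms(3)])
    then show ?thesis
      by blast
  qed
  then obtain f where f: "\<And>u. u \<in> N \<Longrightarrow> f u \<in> K \<and> (\<exists>c>0. u - v = c *\<^sub>R R (f u))"
    by metis
  have "inj_on f N"
  proof (rule inj_onI)
    fix p q assume p: "p \<in> N" and q: "q \<in> N" and "f p = f q"
    obtain cp cq where "0 < cp" "p - v = cp *\<^sub>R R (f p)" "0 < cq" "q - v = cq *\<^sub>R R (f p)"
      using f[OF p] f[OF q] \<open>f p = f q\<close> by auto
    moreover have "p extreme_point_of Q" "q extreme_point_of Q" "v \<in> Q"
      using p q assms(2) unfolding N_def poly_adjacent_def extreme_point_of_def by auto
    ultimately show "p = q"
      using extreme_points_on_ray_eq by blast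
  qed
  then show ?thesis
    using card_inj_on_le[of f N K] f assms(3) unfolding poly_degree_def N_def simplicial_at_def
    by blast
qed

lemma simple_at_if_simplicial_at:
  fixes Q :: "'a::euclidean_space set"
  assumes "polytope Q" "v extreme_point_of Q" "simplicial_at Q v R K" "int (card K) = aff_dim Q"
  shows "simple_at Q v"
  using poly_degree_le_card_rays[OF assms(1-3)] aff_dim_le_poly_degree[OF assms(1,2)] assms(2,4)
  unfolding simple_at_def by linarith

section \<open>Truncating a simple vertex\<close>

lemma truncating_halfspace_vertex_off_hyperplane:
  assumes "truncating_halfspace P T a b" "T face_of P" "u extreme_point_of P"
  shows "a \<bullet> u \<noteq> b"
proof (cases "u \<in> T")
  case True
  then have "u extreme_point_of T"
    using extreme_point_of_face[OF assms(2)] assms(3) by blast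
  then show ?thesis
    using assms(1) unfolding truncating_halfspace_def by force
next
  case False
  then show ?thesis
    using assms(1,3) unfolding truncating_halfspace_def by force
qed

lemma aff_dim_Int_halfspace:
  fixes P :: "'a::euclidean_space set"
  assumes "convex P" "w \<in> P" "a \<bullet> w < b"
  shows "aff_dim (P \<inter> {y. a \<bullet> y \<le> b}) = aff_dim P"
proof -
  have "aff_dim (P \<inter> {y. a \<bullet> y < b}) = aff_dim P"
    using aff_dim_convex_Int_open[OF assms(1) open_halfspace_lt] assms(2,3) by blast
  moreover have "aff_dim (P \<inter> {y. a \<bullet> y < b}) \<le> aff_dim (P \<inter> {y. a \<bullet> y \<le> b})"
    by (intro aff_dim_subset) auto
  moreover have "aff_dim (P \<inter> {y. a \<bullet> y \<le> b}) \<le> aff_dim P"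
    by (intro aff_dim_subset) auto
  ultimately show ?thesis
    by linarith
qed

lemma convex_triangle_step:
  assumes "convex S" "w \<in> S" "u \<in> S" "k \<in> S" "0 < \<mu>" "\<mu> < 1"
  obtains t where "0 < t" "w + (\<mu> - t * \<beta>) *\<^sub>R (u - w) + t *\<^sub>R (k - w) \<in> S"
proof -
  define t where "t = min \<mu> (1 - \<mu>) / (\<bar>\<beta>\<bar> + 1)"
  have "0 < t"
    using assms(5,6) unfolding t_def by (simp add: add_pos_nonneg)
  have "\<bar>\<beta>\<bar> + 1 > 0"
    by (simp add: add_nonneg_pos)
  then have "t * (\<bar>\<beta>\<bar> + 1) = min \<mu> (1 - \<mu>)"
    unfolding t_def by simp
  then have "t * \<bar>\<beta>\<bar> + t = min \<mu> (1 - \<mu>)"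
    by (simp add: distrib_left)
  moreover have "t * (- \<bar>\<beta>\<bar>) \<le> t * \<beta>"
    using \<open>0 < t\<close> by (intro mult_left_mono) auto
  then have "- (t * \<bar>\<beta>\<bar>) \<le> t * \<beta>"
    by simp
  moreover have "t * \<beta> \<le> t * \<bar>\<beta>\<bar>"
    using \<open>0 < t\<close> by (intro mult_left_mono) auto
  moreover have "min \<mu> (1 - \<mu>) \<le> \<mu>" "min \<mu> (1 - \<mu>) \<le> 1 - \<mu>"
    by simp_all
  ultimately have B: "0 \<le> \<mu> - t * \<beta>" "0 \<le> 1 - (\<mu> - t * \<beta>) - t"
    using \<open>0 < t\<close> by linarith+
  have "(1 - (\<mu> - t * \<beta>) - t) *\<^sub>R w + (\<mu> - t * \<beta>) *\<^sub>R u + t *\<^sub>R k \<in> convex hull {w, u, k}"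
    unfolding convex_hull_3 using B \<open>0 < t\<close> by force
  moreover have "convex hull {w, u, k} \<subseteq> S"
    using assms(1-4) by (intro hull_minimal) auto
  moreover have "(1 - (\<mu> - t * \<beta>) - t) *\<^sub>R w + (\<mu> - t * \<beta>) *\<^sub>R u + t *\<^sub>R k
      = w + (\<mu> - t * \<beta>) *\<^sub>R (u - w) + t *\<^sub>R (k - w)"
    by (simp add: algebra_simps)
  ultimately show thesis
    using that \<open>0 < t\<close> by auto
qed

lemma simplicial_at_cut_edge:
  fixes P :: "'a::euclidean_space set"
  assumes "convex P" "w \<in> P" "a \<bullet> w < b"
    and simplicial: "simplicial_at P w (\<lambda>u. u - w) N"
    and N: "\<And>u. u \<in> N \<Longrightarrow> u extreme_point_of P \<and> a \<bullet> u \<noteq> b"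
    and adj: "poly_adjacent (P \<inter> {y. a \<bullet> y \<le> b}) w v" and "a \<bullet> v = b"
  obtains u1 \<mu> where "u1 \<in> N" "0 < \<mu>" "\<mu> < 1" "v = w + \<mu> *\<^sub>R (u1 - w)"
proof -
  define P' where "P' = P \<inter> {y. a \<bullet> y \<le> b}"
  have "simplicial_at P' w (\<lambda>u. u - w) N"
    unfolding P'_def by (rule simplicial_at_Int_halfspace[OF assms(1-3) simplicial])
  moreover obtain e where "e edge_of P'" "w \<in> e" "v \<in> e" "w \<noteq> v" and "v \<in> P"
    using adj unfolding P'_def poly_adjacent_def extreme_point_of_def by blast
  moreover have "convex P'"
    unfolding P'_def using assms(1) by (simp add: convex_Int convex_halfspace_le)
  ultimately obtain u1 \<mu> where u1: "u1 \<in> N" and "0 < \<mu>" and v: "v - w = \<mu> *\<^sub>R (u1 - w)"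
    using simplicial_at_edge_single_ray by metis
  have "\<mu> \<noteq> 1"
    using v N[OF u1] \<open>a \<bullet> v = b\<close> by auto
  moreover have "\<not> \<mu> > 1"
  proof
    assume "\<mu> > 1"
    have "(1 - 1 / \<mu>) *\<^sub>R w + (1 / \<mu>) *\<^sub>R v = w + (1 / \<mu>) *\<^sub>R (v - w)"
      by (simp add: algebra_simps)
    also have "\<dots> = u1"
      using v \<open>\<mu> > 1\<close> by simp
    finally have "u1 = (1 - 1 / \<mu>) *\<^sub>R w + (1 / \<mu>) *\<^sub>R v"
      by simp
    moreover have "0 < 1 / \<mu>" "1 / \<mu> < 1"
      using \<open>\<mu> > 1\<close> by auto
    ultimately have "u1 \<in> open_segment w v"
      using \<open>w \<noteq> v\<close> unfolding in_segment by blast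
    then show False
      using N[OF u1] \<open>v \<in> P\<close> assms(2) unfolding extreme_point_of_def by blast
  qed
  ultimately have "\<mu> < 1"
    by simp
  moreover have "v = w + \<mu> *\<^sub>R (u1 - w)"
    using v by (simp add: algebra_simps)
  ultimately show thesis
    using that u1 \<open>0 < \<mu>\<close> by blast
qed

text \<open>The rays at the new vertex \<open>w + \<mu> (u\<^sub>1 - w)\<close> of a truncated simple vertex \<open>w\<close>:
  back along the cut edge, and every other edge direction of \<open>w\<close> sheared along that edge
  into the cutting hyperplane.\<close>
definition cut_rays :: "('b \<Rightarrow> 'a::real_vector) \<Rightarrow> 'b \<Rightarrow> ('b \<Rightarrow> real) \<Rightarrow> 'b \<Rightarrow> 'a" where
  "cut_rays e j \<beta> k = (if k = j then - e j else e k - \<beta> k *\<^sub>R e j)"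

lemma sum_cut_rays:
  assumes "finite K" "j \<in> K"
  shows "(\<Sum>k\<in>K. c k *\<^sub>R cut_rays e j \<beta> k)
    = (\<Sum>k\<in>K. (if k = j then - c j - (\<Sum>i\<in>K - {j}. c i * \<beta> i) else c k) *\<^sub>R e k)"
proof -
  have "(\<Sum>k\<in>K - {j}. c k *\<^sub>R cut_rays e j \<beta> k)
      = (\<Sum>k\<in>K - {j}. c k *\<^sub>R e k) - (\<Sum>i\<in>K - {j}. c i * \<beta> i) *\<^sub>R e j"
    by (simp add: cut_rays_def scaleR_diff_right sum_subtractf scaleR_sum_left)
  moreover have "(\<Sum>k\<in>K - {j}. (if k = j then - c j - (\<Sum>i\<in>K - {j}. c i * \<beta> i) else c k) *\<^sub>R e k)
      = (\<Sum>k\<in>K - {j}. c k *\<^sub>R e k)"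
    by (rule sum.cong) auto
  ultimately show ?thesis
    using assms by (simp add: sum.remove[of K j] cut_rays_def algebra_simps)
qed

lemma cut_rays_independent:
  assumes "finite K" "j \<in> K"
    and indep: "\<And>c. (\<Sum>k\<in>K. c k *\<^sub>R e k) = 0 \<Longrightarrow> \<forall>k\<in>K. c k = 0"
    and "(\<Sum>k\<in>K. c k *\<^sub>R cut_rays e j \<beta> k) = 0"
  shows "\<forall>k\<in>K. c k = 0"
proof -
  have coeffs: "\<forall>k\<in>K. (if k = j then - c j - (\<Sum>i\<in>K - {j}. c i * \<beta> i) else c k) = 0"
    by (rule indep) (use assms(4) sum_cut_rays[OF assms(1,2), of c e \<beta>] in simp)
  have "c k = 0" if "k \<in> K - {j}" for k
    using coeffs[rule_format, of k] that by simp
  then have "\<forall>k\<in>K - {j}. c k = 0"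
    by blast
  moreover have "- c j - (\<Sum>i\<in>K - {j}. c i * \<beta> i) = 0"
    using coeffs assms(2) by auto
  ultimately show ?thesis
    by auto
qed

locale simple_vertex_cut =
  fixes P :: "'a::euclidean_space set" and w u1 a :: 'a and N :: "'a set" and \<mu> b :: real
  assumes convex: "convex P" and w: "w \<in> P" and N: "N \<subseteq> P"
    and simplicial: "simplicial_at P w (\<lambda>u. u - w) N"
    and u1: "u1 \<in> N" and \<mu>: "0 < \<mu>" "\<mu> < 1"
    and below: "a \<bullet> w < b" and on_cut: "a \<bullet> (w + \<mu> *\<^sub>R (u1 - w)) = b"
begin

definition height_ratio :: "'a \<Rightarrow> real" where
  "height_ratio u = (a \<bullet> (u - w)) / (a \<bullet> (u1 - w))"

definition rays :: "'a \<Rightarrow> 'a" where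
  "rays = cut_rays (\<lambda>u. u - w) u1 height_ratio"

lemma finite_N: "finite N"
  using simplicial simplicial_at_def by blast

lemma height_u1_pos: "a \<bullet> (u1 - w) > 0"
proof -
  have "\<mu> * (a \<bullet> (u1 - w)) = b - a \<bullet> w"
    using on_cut by (simp add: inner_add_right inner_diff_right algebra_simps)
  then have "0 < \<mu> * (a \<bullet> (u1 - w))"
    using below by simp
  then show ?thesis
    using \<mu>(1) zero_less_mult_pos by blast
qed

lemma inner_rays: "k \<noteq> u1 \<Longrightarrow> a \<bullet> rays k = 0"
  using height_u1_pos by (simp add: rays_def cut_rays_def height_ratio_def inner_diff_right)

lemma rays_independent: "(\<Sum>k\<in>N. c k *\<^sub>R rays k) = 0 \<Longrightarrow> \<forall>k\<in>N. c k = 0"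
  unfolding rays_def
  by (rule cut_rays_independent[OF finite_N u1])
     (use simplicial in \<open>auto simp: simplicial_at_def\<close>)

lemma rays_step:
  assumes "k \<in> N"
  shows "\<exists>t>0. w + \<mu> *\<^sub>R (u1 - w) + t *\<^sub>R rays k \<in> P \<inter> {y. a \<bullet> y \<le> b}"
proof (cases "k = u1")
  case True
  then have "w + \<mu> *\<^sub>R (u1 - w) + \<mu> *\<^sub>R rays k = w"
    by (simp add: rays_def cut_rays_def algebra_simps)
  moreover have "w \<in> P \<inter> {y. a \<bullet> y \<le> b}"
    using w below by simp
  ultimately show ?thesis
    using \<mu>(1) by metis
next
  case False
  obtain t where "0 < t" and t: "w + (\<mu> - t * height_ratio k) *\<^sub>R (u1 - w) + t *\<^sub>R (k - w) \<in> P"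
    using convex_triangle_step[OF convex w _ _ \<mu>] u1 assms N by blast
  have "w + \<mu> *\<^sub>R (u1 - w) + t *\<^sub>R rays k = w + (\<mu> - t * height_ratio k) *\<^sub>R (u1 - w) + t *\<^sub>R (k - w)"
    using False by (simp add: rays_def cut_rays_def algebra_simps)
  with t have "w + \<mu> *\<^sub>R (u1 - w) + t *\<^sub>R rays k \<in> P"
    by (simp only:)
  moreover have "a \<bullet> (w + \<mu> *\<^sub>R (u1 - w) + t *\<^sub>R rays k) = b"
    using on_cut inner_rays[OF False] by (simp add: inner_add_right)
  ultimately show ?thesis
    using \<open>0 < t\<close> by (intro exI[of _ t]) simp
qed

lemma rays_cone:
  assumes "y \<in> P \<inter> {y. a \<bullet> y \<le> b}"
  shows "nonneg_comb rays N (y - (w + \<mu> *\<^sub>R (u1 - w)))"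
proof -
  obtain m where m: "\<forall>u\<in>N. 0 \<le> m u" "y - w = (\<Sum>u\<in>N. m u *\<^sub>R (u - w))"
    using simplicial assms unfolding simplicial_at_def nonneg_comb_def by blast
  define S where "S = (\<Sum>i\<in>N - {u1}. m i * height_ratio i)"
  define c where "c k = (if k = u1 then \<mu> - m u1 - S else m k)" for k
  have "(\<Sum>i\<in>N - {u1}. c i * height_ratio i) = S"
    unfolding S_def c_def by (rule sum.cong) auto
  then have "(\<Sum>k\<in>N. c k *\<^sub>R rays k)
      = (\<Sum>k\<in>N. (if k = u1 then m u1 - \<mu> else m k) *\<^sub>R (k - w))"
    unfolding rays_def sum_cut_rays[OF finite_N u1] by (intro sum.cong) (auto simp: c_def)
  also have "\<dots> = (\<Sum>k\<in>N. m k *\<^sub>R (k - w)) - \<mu> *\<^sub>R (u1 - w)"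
    using finite_N u1
    by (simp add: sum.remove[of N u1] scaleR_diff_left cong: if_cong)
  also have "\<dots> = y - (w + \<mu> *\<^sub>R (u1 - w))"
    using m(2) by simp
  finally have comb: "y - (w + \<mu> *\<^sub>R (u1 - w)) = (\<Sum>k\<in>N. c k *\<^sub>R rays k)" ..
  have "a \<bullet> (y - w) = (\<Sum>u\<in>N. m u * height_ratio u) * (a \<bullet> (u1 - w))"
    using height_u1_pos unfolding m(2)
    by (simp add: inner_sum_right sum_distrib_right height_ratio_def)
  also have "(\<Sum>u\<in>N. m u * height_ratio u) = m u1 + S"
    using finite_N u1 height_u1_pos unfolding S_def by (simp add: sum.remove[of N u1] height_ratio_def)
  finally have "(m u1 + S) * (a \<bullet> (u1 - w)) \<le> \<mu> * (a \<bullet> (u1 - w))"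
    using assms on_cut by (simp add: inner_add_right inner_diff_right)
  then have "m u1 + S \<le> \<mu>"
    using height_u1_pos by simp
  then have "\<forall>k\<in>N. 0 \<le> c k"
    using m(1) unfolding c_def by auto
  then show ?thesis
    unfolding nonneg_comb_def using comb by blast
qed

lemma simplicial_at_cut:
  "simplicial_at (P \<inter> {y. a \<bullet> y \<le> b}) (w + \<mu> *\<^sub>R (u1 - w)) rays N"
proof -
  have cut_convex: "convex (P \<inter> {y. a \<bullet> y \<le> b})"
    using convex by (simp add: convex_Int convex_halfspace_le)
  have "w + \<mu> *\<^sub>R (u1 - w) = (1 - \<mu>) *\<^sub>R w + \<mu> *\<^sub>R u1"
    by (simp add: algebra_simps)
  then have cut_vertex: "w + \<mu> *\<^sub>R (u1 - w) \<in> P \<inter> {y. a \<bullet> y \<le> b}"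
    using convexD[OF convex w, of u1 "1 - \<mu>" \<mu>] u1 N \<mu> on_cut by auto
  obtain \<epsilon> where "\<epsilon> > 0"
    "\<And>k s. k \<in> N \<Longrightarrow> 0 \<le> s \<Longrightarrow> s \<le> \<epsilon> \<Longrightarrow> w + \<mu> *\<^sub>R (u1 - w) + s *\<^sub>R rays k \<in> P \<inter> {y. a \<bullet> y \<le> b}"
    using convex_uniform_ray_steps[of "P \<inter> {y. a \<bullet> y \<le> b}" "w + \<mu> *\<^sub>R (u1 - w)" N rays]
      cut_convex cut_vertex finite_N rays_step by blast
  then show ?thesis
    unfolding simplicial_at_def using finite_N rays_independent rays_cone by blast
qed

end

theorem lemma2p15:
  fixes P T P' F :: "'a::euclidean_space set" and x w v a :: 'a and b :: real
  assumes polyP: "polytope P"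
    and "x extreme_point_of P"
    and TP: "T face_of P" and "x \<in> T"
    and trunc: "truncating_halfspace P T a b"
    and P': "P' = P \<inter> {y. a \<bullet> y \<le> b}"
    and F: "F = P' \<inter> {y. a \<bullet> y = b}"
    and "poly_adjacent P x w" and wT: "w \<notin> T"
    and vP': "v extreme_point_of P'" and vF: "v \<in> F" and adj: "poly_adjacent P' w v"
    and simple: "simple_at P w"
  shows "simple_at P' v"
proof -
  define N where "N = {u. poly_adjacent P w u}"
  have wP: "w extreme_point_of P" "w \<in> P"
    using simple by (simp_all add: simple_at_def extreme_point_of_def)
  have below: "a \<bullet> w < b"
    using trunc wP wT unfolding truncating_halfspace_def by blast
  have N: "u extreme_point_of P \<and> a \<bullet> u \<noteq> b" if "u \<in> N" for u
    using that truncating_halfspace_vertex_off_hyperplane[OF trunc TP]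
    unfolding N_def poly_adjacent_def by blast
  have simplicial: "simplicial_at P w (\<lambda>u. u - w) N"
    unfolding N_def by (rule simplicial_at_simple_vertex[OF polyP simple])
  obtain u1 \<mu> where "u1 \<in> N" "0 < \<mu>" "\<mu> < 1" and v: "v = w + \<mu> *\<^sub>R (u1 - w)"
    using simplicial_at_cut_edge[OF polytope_imp_convex[OF polyP] wP(2) below simplicial N]
      adj vF P' F by blast
  interpret cut: simple_vertex_cut P w u1 a N \<mu> b
    using polytope_imp_convex[OF polyP] wP(2) simplicial N \<open>u1 \<in> N\<close> \<open>0 < \<mu>\<close> \<open>\<mu> < 1\<close> below
      vF v P' F
    by unfold_locales (auto simp: extreme_point_of_def)
  have "int (card N) = aff_dim P'"
    using simple aff_dim_Int_halfspace[OF polytope_imp_convex[OF polyP] wP(2) below] P'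
    unfolding simple_at_def poly_degree_def N_def by simp
  then show ?thesis
    using simple_at_if_simplicial_at[OF _ vP' _] polytope_Int_polyhedron[OF polyP polyhedron_halfspace_le]
      cut.simplicial_at_cut v P' by blast
qed

end
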